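(* Fix an integer $k\ge1$, let $\Delta_k:=\log(1/2)/\log(1-2^{-k})$ and fix $\Delta>\Delta_k$. For $n\ge k$ let $m=\lceil\Delta n^k\rceil$ and consider the test $\psi_{\mathcal{L}}(V)=\mathbf{1}\{(\mathcal{L}_V)\text{ has a solution in }\mathbb{F}_2^{N_k}\}$. Under $H_0$ the data $(\ell_j,\varepsilon_j)_{j\in[m]}$ are i.i.d. with $\ell_j$ a uniformly random $k$-tuple of linearly independent linear forms and $\varepsilon_j\in\mathbb{F}_2^k$ uniform and independent of $\ell_j$; under $H_1$ the flats $V_j=\{x:\ell_{j,i}(x)=\varepsilon_{j,i}\ \forall i\}$ have joint law $\mathbf{P}_{\text{planted}}$, each given by any pair $(\ell_j,\varepsilon_j)$ describing it. Then as $n\to\infty$, $$\mathbf{P}_{\text{unif}}(\psi_{\mathcal{L}}=1)\vee\mathbf{P}_{\text{planted}}(\psi_{\mathcal{L}}=0)\to0.$$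
   Context: A $k$-flat of $\mathbb{F}_2^n$ is an affine subspace of dimension $n-k$, described as $\{x:\ell_i(x)=\varepsilon_i\ \forall i\in[k]\}$ with $\ell_1,\dots,\ell_k$ linearly independent linear forms and $\varepsilon\in\mathbb{F}_2^k$. $q_0$ is the uniform distribution on $k$-flats, $q_x$ the uniform distribution on $k$-flats not containing $x$; $\mathbf{P}_{\text{unif}}=q_0^{\otimes m}$, $\mathbf{P}_{\text{planted}}=2^{-n}\sum_{x\in\mathbb{F}_2^n}q_x^{\otimes m}$. Let $N_k=\sum_{i=0}^k\binom{n}{i}$ and index coordinates of $\mathbb{F}_2^{N_k}$ by $S\subseteq[n]$, $|S|\le k$. For linear forms $\ell=(\ell_1,\dots,\ell_k)$ and $\alpha\in\mathbb{F}_2^k$, expand $\prod_{i=1}^k(\ell_i(x)+\alpha_i)$ in $\mathbb{F}_2[x_1,\dots,x_n]$ and reduce with $x_s^2=x_s$ to $\sum_{|S|\le k}c_S(\ell,\alpha)\prod_{s\in S}x_s$; set $\mathcal{L}_{\ell,\alpha}(Y)=\sum_{|S|\le k}c_S(\ell,\alpha)Y_S$. With $\alpha_j=(1-\varepsilon_{j,i})_i$, the system $(\mathcal{L}_V)$ is: $\mathcal{L}_{\ell_j,\alpha_j}(Y)=0$ for all $j\in[m]$, and $Y_\emptyset=1$. $a\vee b=\max(a,b)$. *)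

theory Defs
  imports "HOL-Probability.Probability"
begin

text \<open>A vector x of F_2^n is identified with its support, a subset of {..<n}.
A linear form l on F_2^n is identified with its support A (a subset of {..<n}):
l(x) = sum over s in A of x_s, i.e. the parity of card (A \<inter> x) (True = 1).\<close>

definition lf_eval :: "nat set \<Rightarrow> nat set \<Rightarrow> bool" where
  "lf_eval A x = odd (card (A \<inter> x))"

text \<open>k linearly independent linear forms on F_2^n: no nonempty subfamily sums to zero.\<close>
definition forms_indep :: "nat \<Rightarrow> nat \<Rightarrow> nat set list \<Rightarrow> bool" where
  "forms_indep n k ls \<longleftrightarrow> length ls = k \<and> (\<forall>i<k. ls ! i \<subseteq> {..<n}) \<and>
     (\<forall>I. I \<subseteq> {..<k} \<and> I \<noteq> {} \<longrightarrow> (\<exists>s. odd (card {i\<in>I. s \<in> ls ! i})))"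

definition valid_pair :: "nat \<Rightarrow> nat \<Rightarrow> nat set list \<times> bool list \<Rightarrow> bool" where
  "valid_pair n k p \<longleftrightarrow> forms_indep n k (fst p) \<and> length (snd p) = k"

definition flat_of :: "nat \<Rightarrow> nat set list \<times> bool list \<Rightarrow> nat set set" where
  "flat_of n p = {x. x \<subseteq> {..<n} \<and> (\<forall>i<length (fst p). lf_eval (fst p ! i) x = snd p ! i)}"

definition flats :: "nat \<Rightarrow> nat \<Rightarrow> nat set set set" where
  "flats n k = flat_of n ` {p. valid_pair n k p}"

definition q0 :: "nat \<Rightarrow> nat \<Rightarrow> nat set set pmf" where
  "q0 n k = pmf_of_set (flats n k)"

definition qx :: "nat \<Rightarrow> nat \<Rightarrow> nat set \<Rightarrow> nat set set pmf" where
  "qx n k x = pmf_of_set {V \<in> flats n k. x \<notin> V}"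

definition P_unif_flats :: "nat \<Rightarrow> nat \<Rightarrow> nat \<Rightarrow> (nat \<Rightarrow> nat set set) pmf" where
  "P_unif_flats n k m = Pi_pmf {..<m} {} (\<lambda>_. q0 n k)"

definition P_planted :: "nat \<Rightarrow> nat \<Rightarrow> nat \<Rightarrow> (nat \<Rightarrow> nat set set) pmf" where
  "P_planted n k m = pmf_of_set (Pow {..<n}) \<bind> (\<lambda>x. Pi_pmf {..<m} {} (\<lambda>_. qx n k x))"

text \<open>H_0 on the data: i.i.d. pairs, l uniform among k-tuples of independent forms and
eps uniform in F_2^k, independent (i.e. the pair is uniform on the product set).\<close>
definition pair_unif :: "nat \<Rightarrow> nat \<Rightarrow> (nat set list \<times> bool list) pmf" where
  "pair_unif n k = pmf_of_set {p. valid_pair n k p}"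

definition P_unif_data :: "nat \<Rightarrow> nat \<Rightarrow> nat \<Rightarrow> (nat \<Rightarrow> nat set list \<times> bool list) pmf" where
  "P_unif_data n k m = Pi_pmf {..<m} ([], []) (\<lambda>_. pair_unif n k)"

text \<open>Coefficient c_S(l, alpha) of the monomial prod_{s in S} x_s in the multilinear reduction
of prod_{i<k} (l_i(x) + alpha_i) over F_2: expanding the product, each term picks for every
factor i either a variable x_s with s in l_i (Some s) or the constant alpha_i (None, only
nonzero if alpha_i = 1); after x_s^2 = x_s the term is the monomial on the set of chosen
variables. c_S is the parity of the number of terms giving monomial S.\<close>
definition coeff_c :: "nat set list \<Rightarrow> bool list \<Rightarrow> nat set \<Rightarrow> bool" where
  "coeff_c ls al S = odd (card {c :: nat option list. length c = length ls \<and>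
      (\<forall>i<length ls. (case c ! i of None \<Rightarrow> al ! i | Some s \<Rightarrow> s \<in> ls ! i)) \<and>
      {s. Some s \<in> set c} = S})"

definition L_eval :: "nat \<Rightarrow> nat \<Rightarrow> nat set list \<Rightarrow> bool list \<Rightarrow> (nat set \<Rightarrow> bool) \<Rightarrow> bool" where
  "L_eval n k ls al Y = odd (card {S. S \<subseteq> {..<n} \<and> card S \<le> k \<and> coeff_c ls al S \<and> Y S})"

definition LV_solvable :: "nat \<Rightarrow> nat \<Rightarrow> nat \<Rightarrow> (nat \<Rightarrow> nat set list \<times> bool list) \<Rightarrow> bool" where
  "LV_solvable n k m D \<longleftrightarrow> (\<exists>Y :: nat set \<Rightarrow> bool. Y {} \<and>
     (\<forall>j<m. \<not> L_eval n k (fst (D j)) (map Not (snd (D j))) Y))"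

definition Delta_k :: "nat \<Rightarrow> real" where
  "Delta_k k = ln (1/2) / ln (1 - 2 powr (- real k))"

end

theory Submission
  imports Defs
begin

text \<open>Evaluating all monomials at a point x, i.e. taking Y_S = [S \<subseteq> x], turns
L_{l,\<alpha>}(Y) into \<Prod>_i (l_i(x) + \<alpha>_i); with \<alpha> = 1 + \<epsilon> this vanishes exactly when x lies
outside the flat. Under the planted law x avoids every flat, so (L_V) is always solvable.
Under the null law fix Y with Y_\<emptyset> = 1. Summed over all 2^k shifts \<alpha>, the values
L_{l,\<alpha>}(Y) add up to Y_\<emptyset> mod 2, so for every l some \<epsilon> violates the equation, which a
uniform pair therefore satisfies with probability at most 1 - 2^{-k}. A union bound over the
at most 2^{n^k+1} relevant Y bounds the probability of solvability by
2^{n^k+1} (1 - 2^{-k})^m \<le> 2 (2 (1 - 2^{-k})^\<Delta>)^n, and the base is < 1 exactly when \<Delta> > \<Delta>_k.\<close>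

lemma lists_nth_in_Suc:
  "{c. length c = Suc k \<and> (\<forall>i<Suc k. c ! i \<in> A i)} =
   (\<lambda>(a, c). a # c) ` (A 0 \<times> {c. length c = k \<and> (\<forall>i<k. c ! i \<in> A (Suc i))})"
  (is "?L = ?R")
proof
  show "?L \<subseteq> ?R"
  proof
    fix c assume "c \<in> ?L"
    then obtain a c' where "c = a # c'" "length c' = k" "\<forall>i<Suc k. (a # c') ! i \<in> A i"
      by (auto simp: length_Suc_conv)
    then show "c \<in> ?R" by (force simp: image_iff)
  qed
  show "?R \<subseteq> ?L" by (auto simp: less_Suc_eq_0_disj)
qed

lemma finite_lists_nth_in:
  assumes "\<And>i. i < k \<Longrightarrow> finite (A i)"
  shows "finite {c. length c = k \<and> (\<forall>i<k. c ! i \<in> A i)}"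
  by (rule finite_subset[OF _ finite_lists_length_eq[of "\<Union>i<k. A i" k]])
    (use assms in \<open>auto simp: in_set_conv_nth intro!: bexI\<close>)

lemma card_lists_nth_in:
  assumes "\<And>i. i < k \<Longrightarrow> finite (A i)"
  shows "card {c. length c = k \<and> (\<forall>i<k. c ! i \<in> A i)} = (\<Prod>i<k. card (A i))"
  using assms
proof (induction k arbitrary: A)
  case (Suc k)
  have "inj_on (\<lambda>(a, c). a # c) X" for X :: "('a \<times> 'a list) set"
    by (auto simp: inj_on_def)
  with Suc show ?case
    unfolding lists_nth_in_Suc prod.lessThan_Suc_shift by (simp add: card_image card_cartesian_product)
qed auto

lemma odd_card_odd_card_swap:
  assumes "finite A" "finite B"
  shows "odd (card {a\<in>A. odd (card {b\<in>B. R a b})}) \<longleftrightarrow> odd (card {b\<in>B. odd (card {a\<in>A. R a b})})"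
proof -
  have "(\<Sum>a\<in>A. card {b\<in>B. R a b}) = (\<Sum>a\<in>A. \<Sum>b\<in>B. of_bool (R a b))"
    using assms by (simp add: Int_def)
  also have "\<dots> = (\<Sum>b\<in>B. \<Sum>a\<in>A. of_bool (R a b))"
    by (rule sum.swap)
  also have "\<dots> = (\<Sum>b\<in>B. card {a\<in>A. R a b})"
    using assms by (simp add: Int_def)
  finally show ?thesis
    using even_sum_iff[OF assms(1), of "\<lambda>a. card {b\<in>B. R a b}"]
      even_sum_iff[OF assms(2), of "\<lambda>b. card {a\<in>A. R a b}"] by simp
qed

definition expansion_terms :: "nat set list \<Rightarrow> bool list \<Rightarrow> nat option list set" where
  "expansion_terms ls al = {c. length c = length ls \<and>
      (\<forall>i<length ls. case c ! i of None \<Rightarrow> al ! i | Some s \<Rightarrow> s \<in> ls ! i)}"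

definition term_monomial :: "nat option list \<Rightarrow> nat set" where
  "term_monomial c = {s. Some s \<in> set c}"

lemma coeff_c_eq_odd_card_terms:
  "coeff_c ls al S \<longleftrightarrow> odd (card {c \<in> expansion_terms ls al. term_monomial c = S})"
  unfolding coeff_c_def expansion_terms_def term_monomial_def by (simp add: conj_assoc)

lemma expansion_terms_eq_lists_nth_in:
  "expansion_terms ls al = {c. length c = length ls \<and>
      (\<forall>i<length ls. c ! i \<in> (if al ! i then {None} else {}) \<union> Some ` (ls ! i))}"
  unfolding expansion_terms_def by (intro Collect_cong conj_cong refl all_cong) (auto split: option.split)

lemma finite_expansion_terms:
  assumes "\<And>i. i < length ls \<Longrightarrow> finite (ls ! i)"
  shows "finite (expansion_terms ls al)"
  unfolding expansion_terms_eq_lists_nth_in by (rule finite_lists_nth_in) (simp add: assms)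

lemma term_monomial_subset:
  assumes "c \<in> expansion_terms ls al" "\<And>i. i < length ls \<Longrightarrow> ls ! i \<subseteq> X"
  shows "term_monomial c \<subseteq> X"
proof
  fix s assume "s \<in> term_monomial c"
  then obtain i where i: "i < length c" "c ! i = Some s"
    by (auto simp: term_monomial_def in_set_conv_nth)
  moreover have "length c = length ls" "case c ! i of None \<Rightarrow> al ! i | Some s \<Rightarrow> s \<in> ls ! i"
    using assms(1) i(1) by (auto simp: expansion_terms_def)
  ultimately show "s \<in> X"
    using assms(2)[of i] by auto
qed

lemma card_term_monomial_le:
  assumes "c \<in> expansion_terms ls al"
  shows "card (term_monomial c) \<le> length ls"
proof -
  have "card (term_monomial c) \<le> card (the ` set c)"
    by (rule card_mono) (force simp: term_monomial_def)+
  also have "\<dots> \<le> length c"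
    using card_image_le card_length le_trans by blast
  finally show ?thesis
    using assms by (simp add: expansion_terms_def)
qed

lemma L_eval_iff_odd_card_terms:
  assumes "length ls = k" "\<And>i. i < k \<Longrightarrow> ls ! i \<subseteq> {..<n}"
  shows "L_eval n k ls al Y \<longleftrightarrow> odd (card {c \<in> expansion_terms ls al. Y (term_monomial c)})"
proof -
  define C where "C = expansion_terms ls al"
  define A where "A = {S. S \<subseteq> {..<n} \<and> card S \<le> k \<and> Y S}"
  have "finite C"
    unfolding C_def by (rule finite_expansion_terms) (use assms finite_subset in blast)
  have "finite A"
    unfolding A_def by (rule finite_subset[of _ "Pow {..<n}"]) auto
  have "L_eval n k ls al Y \<longleftrightarrow> odd (card {S\<in>A. odd (card {c \<in> C. term_monomial c = S})})"
    unfolding L_eval_def A_def C_def coeff_c_eq_odd_card_terms by (simp add: conj_ac)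
  also have "\<dots> \<longleftrightarrow> odd (\<Sum>S\<in>A. card {c \<in> C. term_monomial c = S})"
    using even_sum_iff[OF \<open>finite A\<close>, of "\<lambda>S. card {c \<in> C. term_monomial c = S}"] by simp
  also have "(\<Sum>S\<in>A. card {c \<in> C. term_monomial c = S}) = card (\<Union>S\<in>A. {c \<in> C. term_monomial c = S})"
    by (rule card_UN_disjoint[symmetric]) (use \<open>finite A\<close> \<open>finite C\<close> in auto)
  also have "(\<Union>S\<in>A. {c \<in> C. term_monomial c = S}) = {c \<in> C. Y (term_monomial c)}"
    using term_monomial_subset[of _ ls al] card_term_monomial_le[of _ ls al] assms
    unfolding A_def C_def by fastforce
  finally show ?thesis
    unfolding C_def .
qed

lemma L_eval_subset_indicator_iff:
  assumes "length ls = k" "\<And>i. i < k \<Longrightarrow> ls ! i \<subseteq> {..<n}" "length al = k"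
  shows "L_eval n k ls al (\<lambda>S. S \<subseteq> x) \<longleftrightarrow> (\<forall>i<k. al ! i \<noteq> lf_eval (ls ! i) x)"
proof -
  define A where "A i = (if al ! i then {None} else {}) \<union> Some ` (ls ! i \<inter> x)" for i
  have fin: "finite (ls ! i \<inter> x)" if "i < k" for i
    using assms(2)[OF that] finite_subset by blast
  have "term_monomial c \<subseteq> x \<longleftrightarrow> (\<forall>i<length c. \<forall>s. c ! i = Some s \<longrightarrow> s \<in> x)" for c
    by (auto simp: term_monomial_def in_set_conv_nth)
  moreover have "c ! i \<in> A i \<longleftrightarrow>
      c ! i \<in> (if al ! i then {None} else {}) \<union> Some ` (ls ! i) \<and> (\<forall>s. c ! i = Some s \<longrightarrow> s \<in> x)"
    for c i by (cases "c ! i") (auto simp: A_def)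
  ultimately have "{c \<in> expansion_terms ls al. term_monomial c \<subseteq> x} = {c. length c = k \<and> (\<forall>i<k. c ! i \<in> A i)}"
    unfolding expansion_terms_eq_lists_nth_in using assms(1) by auto
  then have "L_eval n k ls al (\<lambda>S. S \<subseteq> x) \<longleftrightarrow> odd (\<Prod>i<k. card (A i))"
    using L_eval_iff_odd_card_terms[OF assms(1,2)] card_lists_nth_in[of k A] fin
    by (simp add: A_def)
  also have "\<dots> \<longleftrightarrow> (\<forall>i<k. odd (card (A i)))"
    by (auto simp: even_prod_iff)
  also have "\<dots> \<longleftrightarrow> (\<forall>i<k. al ! i \<noteq> lf_eval (ls ! i) x)"
    using fin by (auto simp: A_def card_image lf_eval_def)
  finally show ?thesis .
qed

lemma L_eval_subset_indicator_iff_mem_flat: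
  assumes "valid_pair n k (ls, eps)" "x \<subseteq> {..<n}"
  shows "L_eval n k ls (map Not eps) (\<lambda>S. S \<subseteq> x) \<longleftrightarrow> x \<in> flat_of n (ls, eps)"
  using assms L_eval_subset_indicator_iff[of ls k n "map Not eps" x]
  by (auto simp: valid_pair_def forms_indep_def flat_of_def)

lemma L_eval_iff_odd_card_compatible_terms:
  assumes "length ls = k" "\<And>i. i < k \<Longrightarrow> ls ! i \<subseteq> {..<n}"
  shows "L_eval n k ls al Y \<longleftrightarrow> odd (card {c \<in> expansion_terms ls (replicate k True).
           Y (term_monomial c) \<and> (\<forall>i<k. c ! i = None \<longrightarrow> al ! i)})"
proof -
  have "{c \<in> expansion_terms ls al. Y (term_monomial c)} = {c \<in> expansion_terms ls (replicate k True).
      Y (term_monomial c) \<and> (\<forall>i<k. c ! i = None \<longrightarrow> al ! i)}"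
    using assms(1) by (auto simp: expansion_terms_def split: option.split)
  then show ?thesis
    using L_eval_iff_odd_card_terms[OF assms] by simp
qed

lemma odd_card_compatible_bool_lists_iff:
  assumes "length c = k"
  shows "odd (card {al. length al = k \<and> (\<forall>i<k. c ! i = None \<longrightarrow> al ! i)}) \<longleftrightarrow> c = replicate k None"
proof -
  define B where "B i = (if c ! i = None then {True} else UNIV)" for i
  have "{al. length al = k \<and> (\<forall>i<k. c ! i = None \<longrightarrow> al ! i)} = {al. length al = k \<and> (\<forall>i<k. al ! i \<in> B i)}"
    by (auto simp: B_def)
  then have "card {al. length al = k \<and> (\<forall>i<k. c ! i = None \<longrightarrow> al ! i)} = (\<Prod>i<k. card (B i))"
    by (simp add: card_lists_nth_in B_def)
  then have "odd (card {al. length al = k \<and> (\<forall>i<k. c ! i = None \<longrightarrow> al ! i)}) \<longleftrightarrow> (\<forall>i<k. c ! i = None)"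
    by (auto simp: even_prod_iff B_def)
  then show ?thesis
    using assms by (simp add: list_eq_iff_nth_eq)
qed

text \<open>A term choosing variables from j of the k factors is compatible with exactly 2^j shifts,
so modulo 2 only the all-constant term, whose monomial is \<emptyset>, survives the sum over shifts.\<close>

lemma odd_card_L_eval_shifts_iff:
  assumes "length ls = k" "\<And>i. i < k \<Longrightarrow> ls ! i \<subseteq> {..<n}"
  shows "odd (card {al. length al = k \<and> L_eval n k ls al Y}) \<longleftrightarrow> Y {}"
proof -
  define E :: "bool list set" where "E = {al. length al = k}"
  define C where "C = {c \<in> expansion_terms ls (replicate k True). Y (term_monomial c)}"
  have "finite E"
    unfolding E_def using finite_lists_length_eq[of "UNIV :: bool set"] by simp
  have "finite (expansion_terms ls (replicate k True))"
    by (rule finite_expansion_terms) (use assms finite_subset in blast)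
  then have "finite C"
    by (simp add: C_def)
  have "odd (card {al. length al = k \<and> L_eval n k ls al Y}) \<longleftrightarrow>
      odd (card {al\<in>E. odd (card {c\<in>C. \<forall>i<k. c ! i = None \<longrightarrow> al ! i})})"
    using L_eval_iff_odd_card_compatible_terms[OF assms] by (simp add: E_def C_def conj_assoc)
  also have "\<dots> \<longleftrightarrow> odd (card {c\<in>C. odd (card {al\<in>E. \<forall>i<k. c ! i = None \<longrightarrow> al ! i})})"
    by (rule odd_card_odd_card_swap[OF \<open>finite E\<close> \<open>finite C\<close>])
  also have "{c\<in>C. odd (card {al\<in>E. \<forall>i<k. c ! i = None \<longrightarrow> al ! i})} = {c\<in>C. c = replicate k None}"
  proof -
    have "odd (card {al\<in>E. \<forall>i<k. c ! i = None \<longrightarrow> al ! i}) \<longleftrightarrow> c = replicate k None" if "c \<in> C" for c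
      using that assms(1) odd_card_compatible_bool_lists_iff[of c k]
      by (simp add: C_def E_def expansion_terms_def)
    then show ?thesis
      by blast
  qed
  also have "\<dots> = (if Y {} then {replicate k None} else {})"
  proof -
    have "replicate k None \<in> expansion_terms ls (replicate k True)"
      using assms(1) by (simp add: expansion_terms_def)
    moreover have "term_monomial (replicate k None) = {}"
      by (simp add: term_monomial_def)
    ultimately show ?thesis
      by (auto simp: C_def)
  qed
  finally show ?thesis
    by simp
qed

lemma ex_L_eval_shift:
  assumes "length ls = k" "\<And>i. i < k \<Longrightarrow> ls ! i \<subseteq> {..<n}" "Y {}"
  shows "\<exists>al. length al = k \<and> L_eval n k ls al Y"
proof -
  have "odd (card {al. length al = k \<and> L_eval n k ls al Y})"
    using odd_card_L_eval_shifts_iff[of ls k n Y] assms by blast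
  then show ?thesis
    using odd_card_imp_not_empty by fastforce
qed

lemma forms_indep_singletons:
  assumes "k \<le> n"
  shows "forms_indep n k (map (\<lambda>i. {i}) [0..<k])"
  unfolding forms_indep_def
proof (intro conjI allI impI)
  fix I assume I: "I \<subseteq> {..<k} \<and> I \<noteq> {}"
  then obtain s where "s \<in> I"
    by blast
  then have "{i\<in>I. s \<in> map (\<lambda>i. {i}) [0..<k] ! i} = {s}"
    using I by auto
  then show "\<exists>s. odd (card {i\<in>I. s \<in> map (\<lambda>i. {i}) [0..<k] ! i})"
    by (intro exI[of _ s]) simp
qed (use assms in auto)

lemma valid_pairs_eq: "{p. valid_pair n k p} = {ls. forms_indep n k ls} \<times> {eps. length eps = k}"
  by (auto simp: valid_pair_def)

lemma finite_forms_indep: "finite {ls. forms_indep n k ls}"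
  by (rule finite_subset[OF _ finite_lists_length_eq[of "Pow {..<n}" k]])
    (force simp: forms_indep_def in_set_conv_nth)+

lemma finite_valid_pairs: "finite {p. valid_pair n k p}"
  unfolding valid_pairs_eq using finite_forms_indep finite_lists_length_eq[of "UNIV :: bool set"] by simp

lemma card_valid_pairs: "card {p. valid_pair n k p} = card {ls. forms_indep n k ls} * 2 ^ k"
  using card_lists_length_eq[of "UNIV :: bool set" k]
  by (simp add: valid_pairs_eq card_cartesian_product)

lemma card_forms_indep_le_card_violated:
  assumes "Y {}"
  shows "card {ls. forms_indep n k ls}
    \<le> card {p. valid_pair n k p \<and> L_eval n k (fst p) (map Not (snd p)) Y}"
proof -
  have "\<exists>eps. length eps = k \<and> L_eval n k ls (map Not eps) Y" if ls: "forms_indep n k ls" for ls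
  proof -
    obtain al where "length al = k" "L_eval n k ls al Y"
      using ex_L_eval_shift[of ls k n Y] ls assms by (auto simp: forms_indep_def)
    then show ?thesis
      by (intro exI[of _ "map Not al"]) (simp add: comp_def)
  qed
  then obtain eps where eps: "\<And>ls. forms_indep n k ls \<Longrightarrow> length (eps ls) = k \<and> L_eval n k ls (map Not (eps ls)) Y"
    by metis
  show ?thesis
  proof (rule card_inj_on_le)
    show "inj_on (\<lambda>ls. (ls, eps ls)) {ls. forms_indep n k ls}"
      by (auto intro: inj_onI)
    show "(\<lambda>ls. (ls, eps ls)) ` {ls. forms_indep n k ls}
        \<subseteq> {p. valid_pair n k p \<and> L_eval n k (fst p) (map Not (snd p)) Y}"
      using eps by (auto simp: valid_pair_def)
    show "finite {p. valid_pair n k p \<and> L_eval n k (fst p) (map Not (snd p)) Y}"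
      using finite_valid_pairs by simp
  qed
qed

lemma prob_pair_unif_L_eval_fails_le:
  assumes "k \<le> n" "Y {}"
  shows "measure_pmf.prob (pair_unif n k) {p. \<not> L_eval n k (fst p) (map Not (snd p)) Y} \<le> 1 - 1 / 2 ^ k"
proof -
  define V where "V = {p. valid_pair n k p}"
  define G where "G = {p. L_eval n k (fst p) (map Not (snd p)) Y}"
  have "card {ls. forms_indep n k ls} \<noteq> 0"
    using finite_forms_indep forms_indep_singletons[OF assms(1)] by auto
  then have "card V \<noteq> 0"
    by (simp add: V_def card_valid_pairs)
  have "1 / 2 ^ k = card {ls. forms_indep n k ls} / card V"
    using \<open>card {ls. forms_indep n k ls} \<noteq> 0\<close> by (simp add: V_def card_valid_pairs)
  also have "\<dots> \<le> card (V \<inter> G) / card V"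
    using card_forms_indep_le_card_violated[of Y n k] assms(2)
    by (intro divide_right_mono) (simp_all add: V_def G_def Int_def)
  also have "\<dots> = measure_pmf.prob (pair_unif n k) G"
    using \<open>card V \<noteq> 0\<close> by (simp add: pair_unif_def V_def[symmetric] measure_pmf_of_set card_gt_0_iff)
  finally show ?thesis
    using measure_pmf.prob_compl[of G "pair_unif n k"] by (simp add: G_def Compl_eq Diff_eq)
qed

definition low_degree_monomials :: "nat \<Rightarrow> nat \<Rightarrow> nat set set" where
  "low_degree_monomials n k = {S. S \<subseteq> {..<n} \<and> card S \<le> k}"

lemma finite_low_degree_monomials: "finite (low_degree_monomials n k)"
  unfolding low_degree_monomials_def by (rule finite_subset[of _ "Pow {..<n}"]) auto

lemma card_low_degree_monomials_le: "card (low_degree_monomials n k) \<le> n ^ k + 1"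
proof -
  define L where "L = {xs. set xs \<subseteq> {..<n} \<and> length xs = k}"
  have "finite L"
    by (simp add: L_def finite_lists_length_eq)
  have "low_degree_monomials n k \<subseteq> insert {} (set ` L)"
  proof
    fix S assume S: "S \<in> low_degree_monomials n k"
    show "S \<in> insert {} (set ` L)"
    proof (cases "S = {}")
      case False
      have "finite S"
        using S finite_subset by (auto simp: low_degree_monomials_def)
      with False obtain a where "a \<in> S"
        by auto
      define xs where "xs = sorted_list_of_set S @ replicate (k - card S) a"
      have "set xs = S" "length xs = k"
        using \<open>finite S\<close> \<open>a \<in> S\<close> S by (auto simp: xs_def low_degree_monomials_def)
      then show ?thesis
        using S by (auto simp: L_def low_degree_monomials_def)
    qed simp
  qed
  then have "card (low_degree_monomials n k) \<le> card (insert {} (set ` L))"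
    using \<open>finite L\<close> by (intro card_mono) auto
  also have "\<dots> \<le> card L + 1"
    using \<open>finite L\<close> card_image_le[of L set] by (simp add: card_insert_if)
  also have "card L = n ^ k"
    by (simp add: L_def card_lists_length_eq)
  finally show ?thesis .
qed

lemma L_eval_restrict_low_degree:
  "L_eval n k ls al Y = L_eval n k ls al (\<lambda>S. S \<in> {S \<in> low_degree_monomials n k. Y S})"
  unfolding L_eval_def low_degree_monomials_def by (intro arg_cong[where f = "\<lambda>A. odd (card A)"]) auto

lemma LV_solvable_subset_UN:
  "{D. LV_solvable n k m D} \<subseteq> (\<Union>T \<in> {T \<in> Pow (low_degree_monomials n k). {} \<in> T}.
      {..<m} \<rightarrow> {p. \<not> L_eval n k (fst p) (map Not (snd p)) (\<lambda>S. S \<in> T)})"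
proof
  fix D assume "D \<in> {D. LV_solvable n k m D}"
  then obtain Y where Y: "Y {}" "\<forall>j<m. \<not> L_eval n k (fst (D j)) (map Not (snd (D j))) Y"
    by (auto simp: LV_solvable_def)
  define T where "T = {S \<in> low_degree_monomials n k. Y S}"
  show "D \<in> (\<Union>T \<in> {T \<in> Pow (low_degree_monomials n k). {} \<in> T}.
      {..<m} \<rightarrow> {p. \<not> L_eval n k (fst p) (map Not (snd p)) (\<lambda>S. S \<in> T)})"
  proof (rule UN_I[of T])
    show "T \<in> {T \<in> Pow (low_degree_monomials n k). {} \<in> T}"
      using Y(1) by (auto simp: T_def low_degree_monomials_def)
    show "D \<in> {..<m} \<rightarrow> {p. \<not> L_eval n k (fst p) (map Not (snd p)) (\<lambda>S. S \<in> T)}"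
      using Y(2) L_eval_restrict_low_degree[of n k _ _ Y] by (simp add: T_def)
  qed
qed

lemma prob_unif_LV_solvable_le:
  assumes "k \<le> n"
  shows "measure_pmf.prob (P_unif_data n k m) {D. LV_solvable n k m D} \<le> 2 ^ (n ^ k + 1) * (1 - 1 / 2 ^ k) ^ m"
proof -
  define TT where "TT = {T \<in> Pow (low_degree_monomials n k). {} \<in> T}"
  define B where "B T = {p. \<not> L_eval n k (fst p) (map Not (snd p)) (\<lambda>S. S \<in> T)}" for T
  have "finite TT"
    using finite_low_degree_monomials by (simp add: TT_def)
  have "measure_pmf.prob (P_unif_data n k m) {D. LV_solvable n k m D}
      \<le> measure_pmf.prob (P_unif_data n k m) (\<Union>T\<in>TT. {..<m} \<rightarrow> B T)"
    using LV_solvable_subset_UN[of n k m] unfolding TT_def B_def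
    by (rule measure_pmf.finite_measure_mono) simp
  also have "\<dots> \<le> (\<Sum>T\<in>TT. measure_pmf.prob (P_unif_data n k m) ({..<m} \<rightarrow> B T))"
    by (rule measure_pmf.finite_measure_subadditive_finite) (use \<open>finite TT\<close> in auto)
  also have "\<dots> \<le> (\<Sum>T\<in>TT. (1 - 1 / 2 ^ k) ^ m)"
  proof (rule sum_mono)
    fix T assume "T \<in> TT"
    then have "measure_pmf.prob (pair_unif n k) (B T) \<le> 1 - 1 / 2 ^ k"
      unfolding B_def by (intro prob_pair_unif_L_eval_fails_le[OF assms]) (simp add: TT_def)
    then show "measure_pmf.prob (P_unif_data n k m) ({..<m} \<rightarrow> B T) \<le> (1 - 1 / 2 ^ k) ^ m"
      by (simp add: P_unif_data_def measure_Pi_pmf_Pi power_mono)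
  qed
  also have "\<dots> \<le> 2 ^ (n ^ k + 1) * (1 - 1 / 2 ^ k) ^ m"
  proof -
    have "card TT \<le> card (Pow (low_degree_monomials n k))"
      using finite_low_degree_monomials by (intro card_mono) (auto simp: TT_def)
    also have "\<dots> = 2 ^ card (low_degree_monomials n k)"
      using finite_low_degree_monomials by (rule card_Pow)
    also have "\<dots> \<le> 2 ^ (n ^ k + 1)"
      using card_low_degree_monomials_le by (rule power_increasing) simp
    finally have "real (card TT) \<le> 2 ^ (n ^ k + 1)"
      by (metis of_nat_le_iff of_nat_numeral of_nat_power)
    then show ?thesis
      by (simp add: mult_right_mono)
  qed
  finally show ?thesis .
qed

lemma finite_flats: "finite (flats n k)"
  unfolding flats_def using finite_valid_pairs by simp

lemma set_pmf_qx:
  assumes "1 \<le> k" "k \<le> n" "x \<subseteq> {..<n}"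
  shows "set_pmf (qx n k x) = {V \<in> flats n k. x \<notin> V}"
proof -
  define p where "p = (map (\<lambda>i. {i}) [0..<k], map (\<lambda>i. i \<notin> x) [0..<k])"
  have "valid_pair n k p"
    using forms_indep_singletons[OF assms(2)] by (simp add: valid_pair_def p_def)
  moreover have "x \<notin> flat_of n p"
  proof -
    have "lf_eval (fst p ! 0) x \<noteq> snd p ! 0"
      using assms(1) by (cases "0 \<in> x") (simp_all add: p_def lf_eval_def)
    moreover have "0 < length (fst p)"
      using assms(1) by (simp add: p_def)
    ultimately show ?thesis
      unfolding flat_of_def by blast
  qed
  ultimately have "{V \<in> flats n k. x \<notin> V} \<noteq> {}"
    unfolding flats_def by blast
  then show ?thesis
    unfolding qx_def using finite_flats by simp
qed

lemma prob_planted_not_LV_solvable_eq_0: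
  assumes "1 \<le> k" "k \<le> n"
    and rep: "\<And>F j. F j \<in> flats n k \<Longrightarrow> valid_pair n k (rep F j) \<and> flat_of n (rep F j) = F j"
  shows "measure_pmf.prob (P_planted n k m) {F. \<not> LV_solvable n k m (rep F)} = 0"
proof -
  have "LV_solvable n k m (rep F)" if F: "F \<in> set_pmf (P_planted n k m)" for F
  proof -
    have "set_pmf (pmf_of_set (Pow {..<n})) = Pow {..<n}"
      by (rule set_pmf_of_set) auto
    then obtain x where x: "x \<subseteq> {..<n}" and Fx: "F \<in> set_pmf (Pi_pmf {..<m} {} (\<lambda>_. qx n k x))"
      using F by (auto simp: P_planted_def)
    have "\<not> L_eval n k (fst (rep F j)) (map Not (snd (rep F j))) (\<lambda>S. S \<subseteq> x)" if "j < m" for j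
    proof -
      have "F j \<in> set_pmf (qx n k x)"
        using Fx that unfolding set_Pi_pmf[OF finite_lessThan] PiE_dflt_def by auto
      then have Fj: "F j \<in> flats n k" "x \<notin> F j"
        using set_pmf_qx[OF assms(1,2) x] by auto
      obtain ls eps where p: "rep F j = (ls, eps)"
        by (cases "rep F j")
      then have "valid_pair n k (ls, eps)" "flat_of n (ls, eps) = F j"
        using rep[of F j] Fj(1) by simp_all
      then show ?thesis
        using L_eval_subset_indicator_iff_mem_flat[of n k ls eps x] x Fj(2) unfolding p by simp
    qed
    then show ?thesis
      unfolding LV_solvable_def by (intro exI[of _ "\<lambda>S. S \<subseteq> x"]) simp
  qed
  then show ?thesis
    by (auto simp: measure_pmf_zero_iff)
qed

lemma Delta_k_eq: "Delta_k k = ln (1 / 2) / ln (1 - 1 / 2 ^ k)"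
proof -
  have "2 powr (- real k) = 1 / 2 ^ k"
    by (simp add: powr_minus powr_realpow divide_inverse)
  then show ?thesis
    unfolding Delta_k_def by simp
qed

lemma two_mult_powr_lt_1_of_gt_Delta_k:
  assumes "1 \<le> k" "Delta_k k < \<Delta>"
  shows "2 * (1 - 1 / 2 ^ k) powr \<Delta> < 1"
proof -
  define q :: real where "q = 1 - 1 / 2 ^ k"
  have "(2::real) ^ 1 \<le> 2 ^ k"
    using assms(1) by (intro power_increasing) auto
  then have "0 < q" "q < 1"
    by (auto simp: q_def field_simps)
  then have "\<Delta> * ln q < ln (1 / 2)"
    using assms(2) by (simp add: Delta_k_eq q_def[symmetric] neg_divide_less_eq)
  then have "ln (2 * q powr \<Delta>) < 0"
    using \<open>0 < q\<close> by (simp add: ln_mult ln_powr ln_div)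
  then show ?thesis
    using \<open>0 < q\<close> by (simp add: q_def[symmetric] ln_less_zero_iff)
qed

lemma two_pow_mult_pow_ceiling_le:
  fixes q \<Delta> :: real
  assumes "0 < q" "q \<le> 1" "2 * q powr \<Delta> \<le> 1" "1 \<le> k"
  shows "2 ^ (n ^ k + 1) * q ^ nat \<lceil>\<Delta> * real n ^ k\<rceil> \<le> 2 * (2 * q powr \<Delta>) ^ n"
proof -
  have "q ^ nat \<lceil>\<Delta> * real n ^ k\<rceil> \<le> q powr (\<Delta> * real n ^ k)"
    using assms(1,2) real_nat_ceiling_ge[of "\<Delta> * real n ^ k"]
    by (simp add: powr_realpow[symmetric] powr_mono')
  then have "2 ^ (n ^ k + 1) * q ^ nat \<lceil>\<Delta> * real n ^ k\<rceil> \<le> 2 * (2 ^ (n ^ k) * q powr (\<Delta> * real n ^ k))"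
    by simp
  also have "2 ^ (n ^ k) * q powr (\<Delta> * real n ^ k) = (2 * q powr \<Delta>) ^ (n ^ k)"
    using assms(1) by (simp add: power_mult_distrib powr_realpow[symmetric] powr_powr)
  also have "(2 * q powr \<Delta>) ^ (n ^ k) \<le> (2 * q powr \<Delta>) ^ n"
  proof (rule power_decreasing)
    show "n \<le> n ^ k"
      using assms(4) by (cases n) (auto intro: self_le_power)
  qed (use assms(3) in auto)
  finally show ?thesis
    by simp
qed

lemma norm_LV_test_error_le:
  assumes "1 \<le> k" "Delta_k k < \<Delta>" "k \<le> n"
    and "\<And>F j. F j \<in> flats n k \<Longrightarrow> valid_pair n k (rep F j) \<and> flat_of n (rep F j) = F j"
  shows "norm (let m = nat \<lceil>\<Delta> * real n ^ k\<rceil> in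
            max (measure_pmf.prob (P_unif_data n k m) {D. LV_solvable n k m D})
                (measure_pmf.prob (P_planted n k m) {F. \<not> LV_solvable n k m (rep F)}))
         \<le> 2 * (2 * (1 - 1 / 2 ^ k) powr \<Delta>) ^ n"
proof -
  define m where "m = nat \<lceil>\<Delta> * real n ^ k\<rceil>"
  have "measure_pmf.prob (P_unif_data n k m) {D. LV_solvable n k m D} \<le> 2 ^ (n ^ k + 1) * (1 - 1 / 2 ^ k) ^ m"
    by (rule prob_unif_LV_solvable_le[OF assms(3)])
  also have "\<dots> \<le> 2 * (2 * (1 - 1 / 2 ^ k) powr \<Delta>) ^ n"
    unfolding m_def using two_mult_powr_lt_1_of_gt_Delta_k[OF assms(1,2)] assms(1)
    by (intro two_pow_mult_pow_ceiling_le) auto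
  moreover have "measure_pmf.prob (P_planted n k m) {F. \<not> LV_solvable n k m (rep F)} = 0"
    by (rule prob_planted_not_LV_solvable_eq_0[OF assms(1,3)]) (simp add: assms(4))
  ultimately show ?thesis
    by (simp add: m_def[symmetric])
qed

theorem mainTheorem8:
  fixes k :: nat and \<Delta> :: real
    and rep :: "nat \<Rightarrow> (nat \<Rightarrow> nat set set) \<Rightarrow> nat \<Rightarrow> nat set list \<times> bool list"
  assumes "k \<ge> 1"
    and "\<Delta> > Delta_k k"
    and "\<And>n F j. F j \<in> flats n k \<Longrightarrow>
           valid_pair n k (rep n F j) \<and> flat_of n (rep n F j) = F j"
  shows "(\<lambda>n. let m = nat \<lceil>\<Delta> * real n ^ k\<rceil> in
            max (measure_pmf.prob (P_unif_data n k m) {D. LV_solvable n k m D})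
                (measure_pmf.prob (P_planted n k m) {F. \<not> LV_solvable n k m (rep n F)}))
         \<longlonglongrightarrow> 0"
proof -
  have geometric: "(\<lambda>n. 2 * (2 * (1 - 1 / 2 ^ k) powr \<Delta>) ^ n) \<longlonglongrightarrow> 0"
    using two_mult_powr_lt_1_of_gt_Delta_k[OF assms(1,2)]
    by (intro tendsto_mult_right_zero LIMSEQ_power_zero) simp
  show ?thesis
    by (rule Lim_null_comparison[OF eventually_mono[OF eventually_ge_at_top[of k]] geometric])
      (rule norm_LV_test_error_le[OF assms(1,2)], assumption, erule assms(3))
qed

end
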